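(* Let $a,b,d$ be positive integers, $V = \mathbb{C}^a \oplus \mathbb{C}^b$ with basis $e_1,\ldots,e_a$ of $\mathbb{C}^a$ and $f_1,\ldots,f_b$ of $\mathbb{C}^b$, and $W = \bigotimes^d V$. Let the symmetric group $\mathfrak{S}_a$ act on $V$ by permuting $e_1,\ldots,e_a$ (i.e. via permutation matrices on $\mathbb{C}^a$) and trivially on $\mathbb{C}^b$, and diagonally on $W$. For $1\le i\le a$ let $\zeta_{i,b}:V\to V$ be the linear map with $\zeta_{i,b}(e_i)=f_b$ vanishing on all other basis vectors, and let $\varphi_{i,b}:W\to W$ be the linear map defined on basis tensors ($v_k\in\{e_1,\ldots,e_a,f_1,\ldots,f_b\}$) by \[ \varphi_{i,b}(v_1\otimes\cdots\otimes v_d) = \tfrac{1}{d}\sum_{k=1}^d v_1\otimes\cdots\otimes v_{k-1}\otimes \zeta_{i,b}(v_k)\otimes v_{k+1}\otimes\cdots\otimes v_d . \] Then the composition $\varphi_{1,b}\circ\varphi_{2,b}\circ\cdots\circ\varphi_{a,b}:W\to W$ maps $\mathfrak{S}_a$-invariant tensors to $\mathfrak{S}_a$-invariant tensors. *)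

theory Defs
  imports Complex_Main "HOL-Combinatorics.Permutations"
begin

text \<open>Basis of V = C^a (+) C^b: E i is e_i (1 \<le> i \<le> a), F j is f_j (1 \<le> j \<le> b).\<close>
datatype idx = E nat | F nat

definition valid_idx :: "nat \<Rightarrow> nat \<Rightarrow> idx \<Rightarrow> bool" where
  "valid_idx a b x = (case x of E i \<Rightarrow> 1 \<le> i \<and> i \<le> a | F j \<Rightarrow> 1 \<le> j \<and> j \<le> b)"

text \<open>Basis tensors v_1 (x) ... (x) v_d of W are words of length d over the basis.\<close>
definition words :: "nat \<Rightarrow> nat \<Rightarrow> nat \<Rightarrow> idx list set" where
  "words a b d = {w. length w = d \<and> (\<forall>x\<in>set w. valid_idx a b x)}"

text \<open>W = tensor power of V, as coefficient functions supported on basis tensors.\<close>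
definition tensors :: "nat \<Rightarrow> nat \<Rightarrow> nat \<Rightarrow> (idx list \<Rightarrow> complex) set" where
  "tensors a b d = {T. \<forall>w. w \<notin> words a b d \<longrightarrow> T w = 0}"

fun act :: "(nat \<Rightarrow> nat) \<Rightarrow> idx \<Rightarrow> idx" where
  "act \<sigma> (E i) = E (\<sigma> i)"
| "act \<sigma> (F j) = F j"

text \<open>Diagonal action on W: (sigma . T) has coefficient T(sigma^-1 w) at w; invariance under
  all sigma is equivalent to T \<circ> map (act sigma) = T for all sigma.\<close>
definition invariant :: "nat \<Rightarrow> (idx list \<Rightarrow> complex) \<Rightarrow> bool" where
  "invariant a T = (\<forall>\<sigma>. \<sigma> permutes {1..a} \<longrightarrow> (\<lambda>w. T (map (act \<sigma>) w)) = T)"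

text \<open>phi_{i,b}: the coefficient of basis tensor u in phi(T) is
  (1/d) \<Sum>_k [u_k = f_b] T(u with k-th letter replaced by e_i), since zeta_{i,b} sends
  e_i to f_b and kills all other basis vectors.\<close>
definition phi :: "nat \<Rightarrow> nat \<Rightarrow> nat \<Rightarrow> nat \<Rightarrow> (idx list \<Rightarrow> complex) \<Rightarrow> (idx list \<Rightarrow> complex)" where
  "phi a b d i T = (\<lambda>u. if u \<in> words a b d then
      (1 / of_nat d) * (\<Sum>k<d. if u ! k = F b then T (u[k := E i]) else 0)
    else 0)"

fun phis :: "nat \<Rightarrow> nat \<Rightarrow> nat \<Rightarrow> nat \<Rightarrow> (idx list \<Rightarrow> complex) \<Rightarrow> (idx list \<Rightarrow> complex)" where
  "phis a b d 0 = id"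
| "phis a b d (Suc n) = phis a b d n \<circ> phi a b d (Suc n)"

end

theory Submission
  imports Defs
begin

text \<open>First, the maps \<open>\<phi>\<^sub>i\<close> for \<open>1 \<le> i \<le> a\<close> commute pairwise:
  the coefficient of \<open>\<phi>\<^sub>i (\<phi>\<^sub>j S)\<close> at a word is a double sum over pairs of distinct
  \<open>f\<^sub>b\<close>-positions, symmetric under exchanging the roles of \<open>i\<close> and \<open>j\<close>. Second, relabelling by
  \<open>\<sigma>\<close> intertwines \<open>\<phi>\<^sub>i\<close> with \<open>\<phi>\<^bsub>\<sigma>\<^sup>-\<^sup>1 i\<^esub>\<close>. Hence pulling an invariant tensor through the
  composite of all \<open>\<phi>\<^sub>i\<close> merely reorders its factors.\<close>

definition relabel :: "(nat \<Rightarrow> nat) \<Rightarrow> (idx list \<Rightarrow> complex) \<Rightarrow> idx list \<Rightarrow> complex" where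
  "relabel \<sigma> T = (\<lambda>w. T (map (act \<sigma>) w))"

lemma invariant_iff_relabel: "invariant a T \<longleftrightarrow> (\<forall>\<sigma>. \<sigma> permutes {1..a} \<longrightarrow> relabel \<sigma> T = T)"
  by (simp add: invariant_def relabel_def)

lemma length_words: "u \<in> words a b d \<Longrightarrow> length u = d"
  by (simp add: words_def)

lemma list_update_E_in_words:
  "u \<in> words a b d \<Longrightarrow> i \<in> {1..a} \<Longrightarrow> u[k := E i] \<in> words a b d"
  by (auto simp: words_def valid_idx_def dest: set_update_subset_insert[THEN subsetD])

lemma phi_apply: "u \<in> words a b d \<Longrightarrow>
  phi a b d i T u = 1 / of_nat d * (\<Sum>k<d. if u ! k = F b then T (u[k := E i]) else 0)"
  by (simp add: phi_def)

lemma phi_phi_apply: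
  assumes u: "u \<in> words a b d" and i: "i \<in> {1..a}"
  shows "phi a b d i (phi a b d j S) u = 1 / of_nat d * (1 / of_nat d) *
    (\<Sum>k<d. \<Sum>l<d. if u ! k = F b \<and> l \<noteq> k \<and> u ! l = F b then S (u[k := E i, l := E j]) else 0)"
proof -
  have inner: "phi a b d j S (u[k := E i]) = 1 / of_nat d *
      (\<Sum>l<d. if l \<noteq> k \<and> u ! l = F b then S (u[k := E i, l := E j]) else 0)" if "k < d" for k
    using that unfolding phi_apply[OF list_update_E_in_words[OF u i]]
    by (intro arg_cong[where f="(*) _"] sum.cong) (auto simp: nth_list_update length_words[OF u])
  have "phi a b d i (phi a b d j S) u = 1 / of_nat d *
      (\<Sum>k<d. 1 / of_nat d * (\<Sum>l<d. if u ! k = F b \<and> l \<noteq> k \<and> u ! l = F b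
                                    then S (u[k := E i, l := E j]) else 0))"
    unfolding phi_apply[OF u] by (intro arg_cong[where f="(*) _"] sum.cong) (auto simp: inner)
  then show ?thesis
    by (simp add: sum_distrib_left)
qed

lemma phi_commute:
  assumes "i \<in> {1..a}" and "j \<in> {1..a}"
  shows "phi a b d i (phi a b d j S) = phi a b d j (phi a b d i S)"
proof
  fix u
  show "phi a b d i (phi a b d j S) u = phi a b d j (phi a b d i S) u"
  proof (cases "u \<in> words a b d")
    case False
    then show ?thesis by (simp add: phi_def)
  next
    case True
    have "(\<Sum>k<d. \<Sum>l<d. if u ! k = F b \<and> l \<noteq> k \<and> u ! l = F b then S (u[k := E i, l := E j]) else 0)
        = (\<Sum>l<d. \<Sum>k<d. if u ! k = F b \<and> l \<noteq> k \<and> u ! l = F b then S (u[k := E i, l := E j]) else 0)"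
      by (rule sum.swap)
    also have "\<dots> = (\<Sum>l<d. \<Sum>k<d. if u ! l = F b \<and> k \<noteq> l \<and> u ! k = F b
                                       then S (u[l := E j, k := E i]) else 0)"
      by (intro sum.cong refl) (auto simp: list_update_swap)
    finally show ?thesis
      using phi_phi_apply[OF True assms(1), of j S] phi_phi_apply[OF True assms(2), of i S] by simp
  qed
qed

lemma foldr_phi_permuted:
  assumes "mset xs = mset ys" and "set xs \<subseteq> {1..a}"
  shows "foldr (phi a b d) xs = foldr (phi a b d) ys"
proof -
  have "phi a b d x \<circ> phi a b d y = phi a b d y \<circ> phi a b d x" if "x \<in> set xs" "y \<in> set xs" for x y
  proof -
    have "x \<in> {1..a}" "y \<in> {1..a}"
      using that assms(2) by auto
    then show ?thesis
      by (simp add: fun_eq_iff phi_commute)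
  qed
  then have "fold (phi a b d) (rev xs) = fold (phi a b d) (rev ys)"
    using assms(1) by (intro fold_multiset_equiv) auto
  then show ?thesis
    by (simp add: foldr_conv_fold)
qed

lemma act_eq_F_iff: "act \<sigma> x = F j \<longleftrightarrow> x = F j"
  by (cases x) auto

lemma map_act_in_words_iff:
  assumes "\<sigma> permutes {1..a}"
  shows "map (act \<sigma>) u \<in> words a b d \<longleftrightarrow> u \<in> words a b d"
proof -
  have "valid_idx a b (act \<sigma> x) \<longleftrightarrow> valid_idx a b x" for x
    using permutes_in_image[OF assms] by (cases x) (auto simp: valid_idx_def)
  then show ?thesis
    by (auto simp: words_def)
qed

lemma relabel_phi:
  assumes \<sigma>: "\<sigma> permutes {1..a}"
  shows "relabel \<sigma> (phi a b d i S) = phi a b d (inv \<sigma> i) (relabel \<sigma> S)"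
proof
  fix u
  show "relabel \<sigma> (phi a b d i S) u = phi a b d (inv \<sigma> i) (relabel \<sigma> S) u"
  proof (cases "u \<in> words a b d")
    case False
    then show ?thesis by (simp add: relabel_def phi_def map_act_in_words_iff[OF \<sigma>])
  next
    case True
    have upd: "(map (act \<sigma>) u)[k := E i] = map (act \<sigma>) (u[k := E (inv \<sigma> i)])" for k
      using \<sigma> by (simp add: map_update permutes_inverses(1))
    have \<sigma>u: "map (act \<sigma>) u \<in> words a b d"
      using True map_act_in_words_iff[OF \<sigma>] by blast
    show ?thesis
      unfolding relabel_def phi_apply[OF True] phi_apply[OF \<sigma>u]
      by (intro arg_cong[where f="(*) _"] sum.cong) (auto simp: length_words[OF True] act_eq_F_iff upd)
  qed
qed

lemma relabel_foldr_phi: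
  assumes "\<sigma> permutes {1..a}"
  shows "relabel \<sigma> (foldr (phi a b d) xs S) = foldr (phi a b d) (map (inv \<sigma>) xs) (relabel \<sigma> S)"
  by (induction xs) (simp_all add: relabel_phi[OF assms])

lemma phis_eq_foldr: "phis a b d n = foldr (phi a b d) [1..<Suc n]"
  by (induction n) (simp_all add: fun_eq_iff)

lemma foldr_phi_map_permutes:
  assumes "\<tau> permutes {1..a}"
  shows "foldr (phi a b d) (map \<tau> [1..<Suc a]) = foldr (phi a b d) [1..<Suc a]"
proof (rule foldr_phi_permuted)
  have range: "{1..<Suc a} = {1..a}"
    by auto
  show "mset (map \<tau> [1..<Suc a]) = mset [1..<Suc a]"
    using permutes_image_mset[OF assms] by (simp only: mset_map mset_upt range)
  show "set (map \<tau> [1..<Suc a]) \<subseteq> {1..a}"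
    using permutes_image[OF assms] by (simp only: set_map set_upt range)
qed

theorem claim3p1:
  fixes a b d :: nat and T :: "idx list \<Rightarrow> complex"
  assumes "a > 0" and "b > 0" and "d > 0"
    and "T \<in> tensors a b d"
    and "invariant a T"
  shows "invariant a (phis a b d a T)"
  unfolding invariant_iff_relabel
proof (intro allI impI)
  fix \<sigma>
  assume \<sigma>: "\<sigma> permutes {1..a}"
  have T: "relabel \<sigma> T = T"
    using \<open>invariant a T\<close> \<sigma> by (simp add: invariant_iff_relabel)
  have "relabel \<sigma> (phis a b d a T) = foldr (phi a b d) (map (inv \<sigma>) [1..<Suc a]) (relabel \<sigma> T)"
    by (simp add: phis_eq_foldr relabel_foldr_phi[OF \<sigma>])
  also have "\<dots> = phis a b d a T"
    by (simp only: T phis_eq_foldr foldr_phi_map_permutes[OF permutes_inv[OF \<sigma>]])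
  finally show "relabel \<sigma> (phis a b d a T) = phis a b d a T" .
qed

end
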